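(* Let $K$ be an imaginary quadratic field, $O$ an order in $K$, $\mathfrak{m}\subseteq O$ a proper ideal, $\Lambda\subseteq\mathbb{Z}$ multiplicatively closed, $H=P_{O,\Lambda}(\mathfrak{m})$, and $\pi:\mathrm{cl}_H\to\mathrm{cl}_O$ the natural surjection. Let $\Gamma$ be a subgroup of $\mathrm{GL}(O/\mathfrak{m})$ with $\Gamma\supseteq\Gamma_{O,\Lambda}(\mathfrak{m})$. Then $\ker\pi$ acts on the set $$X_\Gamma:=\{M\Gamma: M\in\mathrm{GL}(O/\mathfrak{m})\}/\sim,$$ where $\sim$ identifies left cosets up to left multiplication by $\mu_u$ for $u\in O^\times$; namely, identifying $\ker\pi$ with classes of $[\alpha]\in(O/\mathfrak{m})^\times$ modulo multiplication by the images of $\Lambda$ and $O^\times$ (via $[\alpha]\mapsto[\alpha O]$), the rule $M\Gamma\mapsto\mu_\alpha M\Gamma$ is a well-defined action.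
   Context: $\mathrm{GL}(O/\mathfrak{m})$ is the group of group automorphisms of $O/\mathfrak{m}$, and $\mu_\alpha$ denotes multiplication by $\alpha$ on $O/\mathfrak{m}$. Proper ideal: $\{\alpha\in K:\alpha\mathfrak{m}\subseteq\mathfrak{m}\}=O$. $\mathrm{cl}_O$ is the class group of proper fractional ideals modulo principal ones. $I_O(\mathfrak{m})$ is generated by proper integral ideals coprime to $\mathfrak{m}$, $\mathrm{cl}_H=I_O(\mathfrak{m})/H$, and $\pi$ sends the class of $\mathfrak{a}$ to its class in $\mathrm{cl}_O$. For $\alpha,\beta\in K^\times$, $\alpha\equiv\beta\bmod\mathfrak{m}$ means $\alpha_1\beta_2-\alpha_2\beta_1\in\mathfrak{m}$ whenever $\alpha=\alpha_1/\alpha_2,\beta=\beta_1/\beta_2$ with $\alpha_i,\beta_i\in O$. $P_{O,\Lambda}(\mathfrak{m})=\{\alpha O:\alpha\equiv\lambda\bmod\mathfrak{m}$ for some $\lambda\in\Lambda$ coprime to $N(\mathfrak{m})\}$ and $\Gamma_{O,\Lambda}(\mathfrak{m})=\{\mu_\alpha:\alpha O\in P_{O,\Lambda}(\mathfrak{m})\}$. By an exact sequence $1\to O^\times/(O^\times\cap(\Lambda+\mathfrak{m}))\to(O/\mathfrak{m})^\times/\Delta\to\mathrm{cl}_H\to\mathrm{cl}_O\to1$ (with $\Delta$ the image of $\Lambda$ in $(O/\mathfrak{m})^\times$), $\ker\pi$ is the image of $(O/\mathfrak{m})^\times$ under $[\alpha]\mapsto[\alpha O]$. *)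

theory Defs
  imports Complex_Main "HOL-Algebra.Algebra"
begin

definition imag_quad_field :: "int \<Rightarrow> complex set" where
  "imag_quad_field d =
     {of_rat p + of_rat q * (\<i> * complex_of_real (sqrt (real_of_int d))) | p q. True}"

definition is_imag_quad_field :: "complex set \<Rightarrow> bool" where
  "is_imag_quad_field K \<longleftrightarrow> (\<exists>d::int. d > 0 \<and> K = imag_quad_field d)"

text \<open>An order of K: a subring of K with 1 which is a lattice of full rank (Z-span of two
  R-linearly independent elements).\<close>
definition is_order :: "complex set \<Rightarrow> complex set \<Rightarrow> bool" where
  "is_order K Ord \<longleftrightarrow> Ord \<subseteq> K \<and> 1 \<in> Ord \<and>
     (\<forall>x\<in>Ord. \<forall>y\<in>Ord. x + y \<in> Ord \<and> x * y \<in> Ord \<and> - x \<in> Ord) \<and>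
     (\<exists>\<omega>1 \<omega>2. Ord = {of_int a * \<omega>1 + of_int b * \<omega>2 | a b. True} \<and> Im (\<omega>1 * cnj \<omega>2) \<noteq> 0)"

definition is_ideal :: "complex set \<Rightarrow> complex set \<Rightarrow> bool" where
  "is_ideal Ord m \<longleftrightarrow> m \<subseteq> Ord \<and> 0 \<in> m \<and> (\<forall>x\<in>m. \<forall>y\<in>m. x + y \<in> m) \<and> (\<forall>x\<in>m. - x \<in> m) \<and>
     (\<forall>a\<in>Ord. \<forall>x\<in>m. a * x \<in> m)"

text \<open>Proper ideal: its multiplier ring in K is exactly Ord.\<close>
definition proper_ideal :: "complex set \<Rightarrow> complex set \<Rightarrow> complex set \<Rightarrow> bool" where
  "proper_ideal K Ord m \<longleftrightarrow> is_ideal Ord m \<and> {\<alpha>\<in>K. \<forall>x\<in>m. \<alpha> * x \<in> m} = Ord"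

definition add_grp :: "complex set \<Rightarrow> complex monoid" where
  "add_grp Ord = \<lparr>carrier = Ord, monoid.mult = (+), one = 0\<rparr>"

definition quotO :: "complex set \<Rightarrow> complex set \<Rightarrow> complex set monoid" where
  "quotO Ord m = add_grp Ord Mod m"

definition GL :: "complex set \<Rightarrow> complex set \<Rightarrow> (complex set \<Rightarrow> complex set) monoid" where
  "GL Ord m = AutoGroup (quotO Ord m)"

definition normQ :: "complex set \<Rightarrow> complex set \<Rightarrow> nat" where
  "normQ Ord m = card (carrier (quotO Ord m))"

definition units_O :: "complex set \<Rightarrow> complex set" where
  "units_O Ord = {u\<in>Ord. \<exists>v\<in>Ord. u * v = 1}"

definition units_mod :: "complex set \<Rightarrow> complex set \<Rightarrow> complex set" where
  "units_mod Ord m = {\<alpha>\<in>Ord. \<exists>\<beta>\<in>Ord. \<alpha> * \<beta> - 1 \<in> m}"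

definition mu :: "complex set \<Rightarrow> complex set \<Rightarrow> complex \<Rightarrow> complex set \<Rightarrow> complex set" where
  "mu Ord m \<alpha> = (\<lambda>C\<in>carrier (quotO Ord m). {h + \<alpha> * c | h c. h \<in> m \<and> c \<in> C})"

text \<open>An automorphism f of Ord/m is multiplication by alpha in K (alpha = a1/a2, a_i in Ord).\<close>
definition mult_by :: "complex set \<Rightarrow> complex set \<Rightarrow> complex \<Rightarrow> (complex set \<Rightarrow> complex set) \<Rightarrow> bool" where
  "mult_by Ord m \<alpha> f \<longleftrightarrow> (\<forall>a1 a2 x y. a1 \<in> Ord \<and> a2 \<in> Ord \<and> a2 \<noteq> 0 \<and> \<alpha> = a1 / a2 \<and> x \<in> Ord \<and> y \<in> Ord \<and>
      f (m #>\<^bsub>add_grp Ord\<^esub> x) = m #>\<^bsub>add_grp Ord\<^esub> y \<longrightarrow> a2 * y - a1 * x \<in> m)"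

definition cong_mod :: "complex set \<Rightarrow> complex set \<Rightarrow> complex \<Rightarrow> complex \<Rightarrow> bool" where
  "cong_mod Ord m \<alpha> \<beta> \<longleftrightarrow> (\<forall>a1 a2 b1 b2. a1 \<in> Ord \<and> a2 \<in> Ord \<and> b1 \<in> Ord \<and> b2 \<in> Ord \<and> a2 \<noteq> 0 \<and> b2 \<noteq> 0 \<and>
      \<alpha> = a1 / a2 \<and> \<beta> = b1 / b2 \<longrightarrow> a1 * b2 - a2 * b1 \<in> m)"

definition Lam_cop :: "complex set \<Rightarrow> complex set \<Rightarrow> int set \<Rightarrow> int set" where
  "Lam_cop Ord m \<Lambda> = {l\<in>\<Lambda>. coprime l (int (normQ Ord m))}"

definition P_OL :: "complex set \<Rightarrow> complex set \<Rightarrow> complex set \<Rightarrow> int set \<Rightarrow> complex set set" where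
  "P_OL K Ord m \<Lambda> = {(\<lambda>x. \<alpha> * x) ` Ord | \<alpha>. \<alpha> \<in> K \<and> \<alpha> \<noteq> 0 \<and>
      (\<exists>l\<in>Lam_cop Ord m \<Lambda>. cong_mod Ord m \<alpha> (of_int l))}"

definition Gamma_OL :: "complex set \<Rightarrow> complex set \<Rightarrow> complex set \<Rightarrow> int set \<Rightarrow> (complex set \<Rightarrow> complex set) set" where
  "Gamma_OL K Ord m \<Lambda> = {f \<in> carrier (GL Ord m). \<exists>\<alpha>. \<alpha> \<in> K \<and> \<alpha> \<noteq> 0 \<and>
      (\<lambda>x. \<alpha> * x) ` Ord \<in> P_OL K Ord m \<Lambda> \<and> mult_by Ord m \<alpha> f}"

definition coset_sim :: "complex set \<Rightarrow> complex set \<Rightarrow> (complex set \<Rightarrow> complex set) set \<Rightarrow> (complex set \<Rightarrow> complex set) set \<Rightarrow> bool" where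
  "coset_sim Ord m A B \<longleftrightarrow> (\<exists>u\<in>units_O Ord. B = mu Ord m u <#\<^bsub>GL Ord m\<^esub> A)"

text \<open>Equality in ker pi = (Ord/m)^x / (Delta * image of Ord^x), on representatives.\<close>
definition ker_equiv :: "complex set \<Rightarrow> complex set \<Rightarrow> int set \<Rightarrow> complex \<Rightarrow> complex \<Rightarrow> bool" where
  "ker_equiv Ord m \<Lambda> \<alpha> \<beta> \<longleftrightarrow> (\<exists>l\<in>Lam_cop Ord m \<Lambda>. \<exists>u\<in>units_O Ord. \<alpha> - of_int l * u * \<beta> \<in> m)"

end

theory Submission
  imports Defs
begin

text \<open>Multiplication by \<alpha> on O/m depends only on \<alpha> mod m and is multiplicative, so
  \<alpha> \<mapsto> \<mu>(\<alpha>) is a homomorphism from the unit group of O/m to GL(O/m); this gives the action and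
  its compatibility with products. For a rational integer l, \<mu>(l) is the l-th power map of
  the abelian group O/m and hence central in GL(O/m). If moreover l \<in> \<Lambda> is coprime to N(m),
  then \<mu>(l) lies in \<Gamma>(O,\<Lambda>,m) \<subseteq> \<Gamma>, so it can be moved past M and absorbed into the
  coset M\<Gamma>, while unit factors u of O are absorbed by \<sim>. Hence \<alpha> \<equiv> l u \<beta> acts like \<beta>.\<close>

lemma (in group) l_coset_absorb_central:
  assumes "subgroup H G" and "z \<in> H" and "M \<in> carrier G" and "z \<otimes> M = M \<otimes> z"
  shows "(z \<otimes> M) <#\<^bsub>G\<^esub> H = M <#\<^bsub>G\<^esub> H"
proof -
  have z: "z \<in> carrier G" using assms(1,2) subgroup.subset by blast
  have "(z \<otimes> M) <#\<^bsub>G\<^esub> H = M <#\<^bsub>G\<^esub> (z <#\<^bsub>G\<^esub> H)"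
    using assms(1,3,4) z by (simp add: lcos_m_assoc subgroup.subset)
  also have "\<dots> = M <#\<^bsub>G\<^esub> H" using coset_join3[OF z assms(1,2)] by simp
  finally show ?thesis .
qed

lemma of_int_in_imag_quad_field: "of_int l \<in> imag_quad_field d"
  unfolding imag_quad_field_def by (intro CollectI exI[of _ "of_int l"] exI[of _ 0]) simp

locale ideal_of_subring =
  fixes Ord m :: "complex set"
  assumes one_mem: "1 \<in> Ord"
    and ring_closed: "\<forall>x\<in>Ord. \<forall>y\<in>Ord. x + y \<in> Ord \<and> x * y \<in> Ord \<and> - x \<in> Ord"
    and ideal: "is_ideal Ord m"
begin

abbreviation Q :: "complex set monoid" where "Q \<equiv> quotO Ord m"
abbreviation cls :: "complex \<Rightarrow> complex set" where "cls x \<equiv> m #>\<^bsub>add_grp Ord\<^esub> x"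

lemma add_mem: "x \<in> Ord \<Longrightarrow> y \<in> Ord \<Longrightarrow> x + y \<in> Ord"
  and mult_mem: "x \<in> Ord \<Longrightarrow> y \<in> Ord \<Longrightarrow> x * y \<in> Ord"
  and uminus_mem: "x \<in> Ord \<Longrightarrow> - x \<in> Ord"
  using ring_closed by blast+

lemma zero_mem: "0 \<in> Ord"
  using add_mem[OF one_mem uminus_mem[OF one_mem]] by simp

lemma of_nat_mem: "of_nat n \<in> Ord"
  by (induction n) (auto simp: zero_mem add_mem one_mem add.commute)

lemma of_int_mem: "of_int k \<in> Ord"
  by (cases k rule: int_cases2) (simp_all add: of_nat_mem uminus_mem)

lemma ideal_subset: "m \<subseteq> Ord"
  and ideal_zero: "0 \<in> m"
  and ideal_add: "x \<in> m \<Longrightarrow> y \<in> m \<Longrightarrow> x + y \<in> m"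
  and ideal_uminus: "x \<in> m \<Longrightarrow> - x \<in> m"
  and ideal_mult: "a \<in> Ord \<Longrightarrow> x \<in> m \<Longrightarrow> a * x \<in> m"
  using ideal unfolding is_ideal_def by blast+

lemma comm_group_add_grp: "comm_group (add_grp Ord)"
  by (rule comm_groupI)
    (auto simp: add_grp_def add_mem zero_mem intro: bexI[of _ "- _"] uminus_mem)

lemma inv_add_grp: "x \<in> Ord \<Longrightarrow> inv\<^bsub>add_grp Ord\<^esub> x = - x"
  by (rule group.inv_equality[OF comm_group.axioms(2)[OF comm_group_add_grp]])
    (auto simp: add_grp_def uminus_mem)

lemma normal_ideal: "m \<lhd> add_grp Ord"
proof -
  have "subgroup m (add_grp Ord)"
    by (rule subgroup.intro)
      (use ideal_subset ideal_zero ideal_add ideal_uminus inv_add_grp in \<open>auto simp: add_grp_def\<close>)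
  then show ?thesis using comm_group.subgroup_imp_normal[OF comm_group_add_grp] by blast
qed

lemma group_quotO: "group Q"
  unfolding quotO_def by (rule normal.factorgroup_is_group[OF normal_ideal])

lemma cls_eq_image: "cls x = (\<lambda>h. h + x) ` m"
  by (auto simp: r_coset_def add_grp_def)

lemma carrier_quotO: "carrier Q = cls ` Ord"
  unfolding quotO_def carrier_FactGroup by (simp add: add_grp_def)

lemma cls_in_quotO: "x \<in> Ord \<Longrightarrow> cls x \<in> carrier Q"
  using carrier_quotO by blast

lemma quotO_cases:
  assumes "C \<in> carrier Q" obtains x where "x \<in> Ord" and "C = cls x"
  using assms carrier_quotO by blast

lemma mem_cls_iff: "x \<in> cls y \<longleftrightarrow> x - y \<in> m"
  by (force simp: cls_eq_image)

lemma cls_eq_iff: "x \<in> Ord \<Longrightarrow> y \<in> Ord \<Longrightarrow> cls x = cls y \<longleftrightarrow> x - y \<in> m"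
proof -
  assume "x \<in> Ord" "y \<in> Ord"
  then have "x \<in> carrier (add_grp Ord)" "y \<in> carrier (add_grp Ord)" by (simp_all add: add_grp_def)
  moreover have "group (add_grp Ord)" and "subgroup m (add_grp Ord)"
    using comm_group_add_grp normal_ideal by (simp_all add: comm_group.axioms(2) normal_imp_subgroup)
  ultimately have "cls x = cls y \<longleftrightarrow> x \<in> cls y"
    by (metis group.rcos_self group.repr_independence)
  then show ?thesis by (simp add: mem_cls_iff)
qed

lemma mult_quotO: "x \<in> Ord \<Longrightarrow> y \<in> Ord \<Longrightarrow> cls x \<otimes>\<^bsub>Q\<^esub> cls y = cls (x + y)"
  unfolding quotO_def using normal.rcos_sum[OF normal_ideal, of x y] by (simp add: add_grp_def)

lemma mu_cls:
  assumes a: "a \<in> Ord" and x: "x \<in> Ord"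
  shows "mu Ord m a (cls x) = cls (a * x)"
proof -
  have "{h + a * c | h c. h \<in> m \<and> c \<in> cls x} = cls (a * x)"
  proof safe
    fix h c assume "h \<in> m" and "c \<in> cls x"
    then have "h + a * (c - x) \<in> m" using a ideal_add ideal_mult by (simp add: mem_cls_iff)
    then show "h + a * c \<in> cls (a * x)" by (simp add: mem_cls_iff algebra_simps)
  next
    fix y assume "y \<in> cls (a * x)"
    moreover have "x \<in> cls x" by (simp add: mem_cls_iff ideal_zero)
    ultimately show "\<exists>h c. y = h + a * c \<and> h \<in> m \<and> c \<in> cls x"
      by (force simp: mem_cls_iff)
  qed
  then show ?thesis using cls_in_quotO[OF x] by (simp add: mu_def)
qed

lemma mu_extensional: "mu Ord m a \<in> extensional (carrier Q)"
  by (simp add: mu_def)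

lemma mu_cong:
  assumes "a \<in> Ord" and "b \<in> Ord" and "a - b \<in> m"
  shows "mu Ord m a = mu Ord m b"
proof (rule extensionalityI[OF mu_extensional mu_extensional])
  fix C assume "C \<in> carrier Q"
  then obtain x where x: "x \<in> Ord" "C = cls x" by (rule quotO_cases)
  have "x * (a - b) \<in> m" using ideal_mult[OF x(1) assms(3)] .
  then show "mu Ord m a C = mu Ord m b C"
    using x assms by (simp add: mu_cls cls_eq_iff mult_mem algebra_simps)
qed

lemma mu_closed: "a \<in> Ord \<Longrightarrow> C \<in> carrier Q \<Longrightarrow> mu Ord m a C \<in> carrier Q"
  by (metis quotO_cases mu_cls cls_in_quotO mult_mem)

lemma mu_compose:
  assumes "a \<in> Ord" and "b \<in> Ord"
  shows "compose (carrier Q) (mu Ord m a) (mu Ord m b) = mu Ord m (a * b)"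
proof (rule extensionalityI[OF compose_extensional mu_extensional])
  fix C assume "C \<in> carrier Q"
  then obtain x where "x \<in> Ord" "C = cls x" by (rule quotO_cases)
  then show "compose (carrier Q) (mu Ord m a) (mu Ord m b) C = mu Ord m (a * b) C"
    using assms by (simp add: compose_def mu_cls mult_mem mult.assoc cls_in_quotO)
qed

lemma mu_one: "mu Ord m 1 = (\<lambda>C\<in>carrier Q. C)"
proof (rule extensionalityI[OF mu_extensional])
  fix C assume "C \<in> carrier Q"
  then obtain x where "x \<in> Ord" "C = cls x" by (rule quotO_cases)
  then show "mu Ord m 1 C = (\<lambda>C\<in>carrier Q. C) C" by (simp add: mu_cls one_mem cls_in_quotO)
qed simp

lemma mu_hom: "a \<in> Ord \<Longrightarrow> mu Ord m a \<in> hom Q Q"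
  by (rule homI) (auto simp: mu_closed elim!: quotO_cases
      simp: mult_quotO mu_cls add_mem mult_mem distrib_left)

lemma carrier_GL: "carrier (GL Ord m) = auto Q"
  by (simp add: GL_def AutoGroup_def BijGroup_def)

lemma group_GL: "group (GL Ord m)"
  unfolding GL_def by (rule group.AutoGroup[OF group_quotO])

sublocale GL: group "GL Ord m"
  by (rule group_GL)

lemma mult_GL:
  "f \<in> carrier (GL Ord m) \<Longrightarrow> g \<in> carrier (GL Ord m) \<Longrightarrow> f \<otimes>\<^bsub>GL Ord m\<^esub> g = compose (carrier Q) f g"
  by (simp add: carrier_GL auto_def) (simp add: GL_def AutoGroup_def BijGroup_def)

lemma one_GL: "\<one>\<^bsub>GL Ord m\<^esub> = mu Ord m 1"
  by (simp add: GL_def AutoGroup_def BijGroup_def mu_one)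

lemma units_mod_mult: "a \<in> units_mod Ord m \<Longrightarrow> b \<in> units_mod Ord m \<Longrightarrow> a * b \<in> units_mod Ord m"
proof -
  assume "a \<in> units_mod Ord m" "b \<in> units_mod Ord m"
  then obtain a' b' where a: "a \<in> Ord" "a' \<in> Ord" "a * a' - 1 \<in> m"
    and b: "b \<in> Ord" "b' \<in> Ord" "b * b' - 1 \<in> m"
    by (auto simp: units_mod_def)
  have "(a * a') * (b * b' - 1) + (a * a' - 1) \<in> m"
    using a b by (simp add: ideal_add ideal_mult mult_mem)
  then have "(a * b) * (a' * b') - 1 \<in> m" by (simp add: algebra_simps)
  then show ?thesis using a b by (auto simp: units_mod_def mult_mem)
qed

lemma units_O_subset_units_mod: "units_O Ord \<subseteq> units_mod Ord m"
  by (force simp: units_O_def units_mod_def ideal_zero)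

lemma mu_in_GL:
  assumes "a \<in> units_mod Ord m"
  shows "mu Ord m a \<in> carrier (GL Ord m)"
proof -
  obtain b where a: "a \<in> Ord" and b: "b \<in> Ord" and ab: "a * b - 1 \<in> m"
    using assms by (auto simp: units_mod_def)
  have "mu Ord m (a * b) = mu Ord m 1" and "mu Ord m (b * a) = mu Ord m 1"
    using mu_cong[OF mult_mem[OF a b] one_mem ab] by (simp_all add: mult.commute)
  then have "compose (carrier Q) (mu Ord m b) (mu Ord m a) = (\<lambda>C\<in>carrier Q. C)"
    and "compose (carrier Q) (mu Ord m a) (mu Ord m b) = (\<lambda>C\<in>carrier Q. C)"
    by (simp_all add: mu_compose a b mu_one)
  then have "\<forall>C\<in>carrier Q. mu Ord m b (mu Ord m a C) = C"
    and "\<forall>C\<in>carrier Q. mu Ord m a (mu Ord m b C) = C"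
    by (metis compose_eq restrict_apply')+
  then have "bij_betw (mu Ord m a) (carrier Q) (carrier Q)"
    by (intro bij_betw_byWitness[where f' = "mu Ord m b"]) (auto simp: a b mu_closed)
  then show ?thesis using mu_hom[OF a] mu_extensional by (simp add: carrier_GL auto_def Bij_def)
qed

lemma mu_mult_GL:
  "a \<in> units_mod Ord m \<Longrightarrow> b \<in> units_mod Ord m \<Longrightarrow> mu Ord m a \<otimes>\<^bsub>GL Ord m\<^esub> mu Ord m b = mu Ord m (a * b)"
  by (simp add: mult_GL mu_in_GL mu_compose units_mod_def)

lemma pow_add_grp_nat: "x \<in> Ord \<Longrightarrow> x [^]\<^bsub>add_grp Ord\<^esub> (n::nat) = of_nat n * x"
  by (induction n) (simp_all add: add_grp_def distrib_right)

lemma pow_add_grp_int: "x \<in> Ord \<Longrightarrow> x [^]\<^bsub>add_grp Ord\<^esub> (k::int) = of_int k * x"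
  by (cases k rule: int_cases2)
    (simp_all add: int_pow_int int_pow_def2 pow_add_grp_nat inv_add_grp mult_mem of_nat_mem,
     simp add: add_grp_def)

lemma mu_of_int_eq_pow: "C \<in> carrier Q \<Longrightarrow> mu Ord m (of_int k) C = C [^]\<^bsub>Q\<^esub> k"
proof -
  assume "C \<in> carrier Q"
  then obtain x where x: "x \<in> Ord" "C = cls x" by (rule quotO_cases)
  moreover have "x \<in> carrier (add_grp Ord)" using x by (simp add: add_grp_def)
  ultimately have "C [^]\<^bsub>Q\<^esub> k = cls (of_int k * x)"
    unfolding quotO_def using normal.FactGroup_int_pow[OF normal_ideal] pow_add_grp_int by simp
  then show ?thesis using x by (simp add: mu_cls of_int_mem)
qed

lemma mu_of_int_central:
  assumes M: "M \<in> carrier (GL Ord m)" and k: "mu Ord m (of_int k) \<in> carrier (GL Ord m)"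
  shows "mu Ord m (of_int k) \<otimes>\<^bsub>GL Ord m\<^esub> M = M \<otimes>\<^bsub>GL Ord m\<^esub> mu Ord m (of_int k)"
proof -
  have hom: "M \<in> hom Q Q" using M by (simp add: carrier_GL auto_def)
  have "M (mu Ord m (of_int k) C) = mu Ord m (of_int k) (M C)" if "C \<in> carrier Q" for C
    using that hom_int_pow[OF hom that group_quotO group_quotO] hom_in_carrier[OF hom that]
    by (simp add: mu_of_int_eq_pow)
  then show ?thesis
    by (simp add: mult_GL M k compose_def cong: restrict_cong)
qed

lemma normQ_mem_ideal: "of_nat (normQ Ord m) \<in> m"
proof -
  have "cls (of_nat (normQ Ord m)) = cls 1 [^]\<^bsub>Q\<^esub> int (order Q)"
    using mu_of_int_eq_pow[OF cls_in_quotO[OF one_mem], of "int (order Q)"]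
    by (simp add: mu_cls one_mem of_nat_mem order_def normQ_def)
  also have "\<dots> = \<one>\<^bsub>Q\<^esub>"
    by (simp add: int_pow_int group.pow_order_eq_1[OF group_quotO] cls_in_quotO one_mem)
  also have "\<dots> = cls 0"
    by (simp add: quotO_def cls_eq_image)
  finally show ?thesis by (simp add: cls_eq_iff of_nat_mem zero_mem)
qed

lemma of_int_in_units_mod:
  assumes "coprime l (int (normQ Ord m))"
  shows "of_int l \<in> units_mod Ord m"
proof -
  obtain u v where "u * l + v * int (normQ Ord m) = 1"
    using assms bezout_int[of l "int (normQ Ord m)"] by (auto simp: coprime_iff_gcd_eq_1)
  then have "of_int (u * l + v * int (normQ Ord m)) = (1 :: complex)" by simp
  then have "(of_int l * of_int u - 1 :: complex) = of_int (- v) * of_nat (normQ Ord m)"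
    by (simp add: algebra_simps)
  also have "\<dots> \<in> m" by (rule ideal_mult[OF of_int_mem normQ_mem_ideal])
  finally show ?thesis by (auto simp: units_mod_def of_int_mem)
qed

lemma cong_mod_refl: "cong_mod Ord m \<alpha> \<alpha>"
  by (auto simp: cong_mod_def frac_eq_eq ideal_zero)

lemma mult_by_mu:
  assumes "\<alpha> \<in> Ord"
  shows "mult_by Ord m \<alpha> (mu Ord m \<alpha>)"
  unfolding mult_by_def
proof (intro allI impI)
  fix a1 a2 x y
  assume h: "a1 \<in> Ord \<and> a2 \<in> Ord \<and> a2 \<noteq> 0 \<and> \<alpha> = a1 / a2 \<and> x \<in> Ord \<and> y \<in> Ord \<and>
    mu Ord m \<alpha> (cls x) = cls y"
  then have x: "x \<in> Ord" and y: "y \<in> Ord" and a2: "a2 \<in> Ord" and a1: "a1 = \<alpha> * a2"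
    and xy: "mu Ord m \<alpha> (cls x) = cls y" by auto
  have "\<alpha> * x - y \<in> m" using assms x y xy by (simp add: mu_cls cls_eq_iff mult_mem)
  then have "(- a2) * (\<alpha> * x - y) \<in> m" using a2 by (simp add: ideal_mult uminus_mem del: mult_minus_left)
  moreover have "(- a2) * (\<alpha> * x - y) = a2 * y - a1 * x" by (simp add: a1 algebra_simps)
  ultimately show "a2 * y - a1 * x \<in> m" by simp
qed

lemma mu_of_int_in_Gamma_OL:
  assumes K: "is_imag_quad_field K" and l: "l \<in> Lam_cop Ord m \<Lambda>" and "l \<noteq> 0"
  shows "mu Ord m (of_int l) \<in> Gamma_OL K Ord m \<Lambda>"
proof -
  have lK: "of_int l \<in> K" using K by (auto simp: is_imag_quad_field_def of_int_in_imag_quad_field)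
  have l0: "(of_int l :: complex) \<noteq> 0" using \<open>l \<noteq> 0\<close> by simp
  have "(\<lambda>x. of_int l * x) ` Ord \<in> P_OL K Ord m \<Lambda>"
    unfolding P_OL_def using lK l0 l cong_mod_refl by blast
  moreover have "mu Ord m (of_int l) \<in> carrier (GL Ord m)"
    using l by (simp add: Lam_cop_def mu_in_GL of_int_in_units_mod)
  ultimately show ?thesis
    unfolding Gamma_OL_def using lK l0 mult_by_mu[OF of_int_mem] by blast
qed

lemma mu_of_int_in_subgroup:
  assumes "is_imag_quad_field K" and "subgroup \<Gamma> (GL Ord m)" and "Gamma_OL K Ord m \<Lambda> \<subseteq> \<Gamma>"
    and l: "l \<in> Lam_cop Ord m \<Lambda>"
  shows "mu Ord m (of_int l) \<in> \<Gamma>"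
proof (cases "l = 0")
  case True
  \<comment> \<open>Then N(m) = 1, so m = Ord and \<mu>(0) is the identity; \<open>Gamma_OL\<close> itself excludes \<alpha> = 0.\<close>
  have "of_int l \<in> units_mod Ord m" using l by (simp add: Lam_cop_def of_int_in_units_mod)
  then have "(0::complex) - 1 \<in> m" using True by (auto simp: units_mod_def)
  then have "mu Ord m (of_int l) = \<one>\<^bsub>GL Ord m\<^esub>"
    using True mu_cong[OF zero_mem one_mem] by (simp add: one_GL)
  then show ?thesis using subgroup.one_closed[OF assms(2)] by simp
next
  case False
  then show ?thesis using mu_of_int_in_Gamma_OL assms by blast
qed

lemma units_O_mult:
  assumes "u \<in> units_O Ord" and "v \<in> units_O Ord"
  shows "u * v \<in> units_O Ord"
proof -
  obtain u' v' where "u \<in> Ord" "u' \<in> Ord" "u * u' = 1" "v \<in> Ord" "v' \<in> Ord" "v * v' = 1"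
    using assms by (auto simp: units_O_def)
  moreover have "(u * v) * (v' * u') = (u * u') * (v * v')" by (simp add: ac_simps)
  ultimately show ?thesis by (auto simp: units_O_def mult_mem)
qed

lemma units_O_inverse:
  assumes "u \<in> units_O Ord" obtains u' where "u' \<in> units_O Ord" and "u * u' = 1"
proof -
  obtain u' where "u \<in> Ord" "u' \<in> Ord" "u * u' = 1" using assms by (auto simp: units_O_def)
  then show thesis using that[of u'] by (auto simp: units_O_def mult.commute)
qed

lemma cong_unit_rescale:
  assumes u: "u \<in> units_O Ord" and v: "v \<in> units_O Ord" and cong: "\<alpha> - c * u * \<beta> \<in> m"
  obtains w where "w \<in> units_O Ord" and "w * \<alpha> - c * (\<beta> * v) \<in> m"
proof -
  obtain u' where u': "u' \<in> units_O Ord" and "u * u' = 1" using u by (rule units_O_inverse)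
  then have "(v * u') * u = v" by (simp add: mult.commute mult.left_commute)
  then have "(v * u') * \<alpha> - c * (\<beta> * v) = (v * u') * (\<alpha> - c * u * \<beta>)"
    by (auto simp: algebra_simps)
  also have "\<dots> \<in> m"
    using units_O_mult[OF v u'] by (intro ideal_mult[OF _ cong]) (simp add: units_O_def)
  finally show thesis using that units_O_mult[OF v u'] by blast
qed

context
  fixes \<Gamma> :: "(complex set \<Rightarrow> complex set) set"
  assumes subgroup_\<Gamma>: "subgroup \<Gamma> (GL Ord m)"
begin

lemma coset_sim_mu_unit:
  assumes "u \<in> units_O Ord" and "M \<in> carrier (GL Ord m)"
  shows "coset_sim Ord m (M <#\<^bsub>GL Ord m\<^esub> \<Gamma>) ((mu Ord m u \<otimes>\<^bsub>GL Ord m\<^esub> M) <#\<^bsub>GL Ord m\<^esub> \<Gamma>)"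
  using assms units_O_subset_units_mod mu_in_GL GL.lcos_m_assoc[OF subgroup.subset[OF subgroup_\<Gamma>]]
  unfolding coset_sim_def by blast

lemma coset_sim_refl:
  assumes "M \<in> carrier (GL Ord m)"
  shows "coset_sim Ord m (M <#\<^bsub>GL Ord m\<^esub> \<Gamma>) (M <#\<^bsub>GL Ord m\<^esub> \<Gamma>)"
proof -
  have "1 \<in> units_O Ord" using one_mem by (auto simp: units_O_def)
  from coset_sim_mu_unit[OF this assms] show ?thesis using assms by (simp flip: one_GL)
qed

lemma mu_action_well_defined:
  assumes \<Lambda>_\<Gamma>: "\<forall>l\<in>Lam_cop Ord m \<Lambda>. mu Ord m (of_int l) \<in> \<Gamma>"
    and \<alpha>: "\<alpha> \<in> units_mod Ord m" and \<beta>: "\<beta> \<in> units_mod Ord m"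
    and M: "M \<in> carrier (GL Ord m)" and N: "N \<in> carrier (GL Ord m)"
    and ker: "ker_equiv Ord m \<Lambda> \<alpha> \<beta>"
    and sim: "coset_sim Ord m (M <#\<^bsub>GL Ord m\<^esub> \<Gamma>) (N <#\<^bsub>GL Ord m\<^esub> \<Gamma>)"
  shows "coset_sim Ord m ((mu Ord m \<alpha> \<otimes>\<^bsub>GL Ord m\<^esub> M) <#\<^bsub>GL Ord m\<^esub> \<Gamma>)
                          ((mu Ord m \<beta> \<otimes>\<^bsub>GL Ord m\<^esub> N) <#\<^bsub>GL Ord m\<^esub> \<Gamma>)"
proof -
  obtain l u where l: "l \<in> Lam_cop Ord m \<Lambda>" and u: "u \<in> units_O Ord"
    and \<alpha>_cong: "\<alpha> - of_int l * u * \<beta> \<in> m"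
    using ker unfolding ker_equiv_def by blast
  obtain v where v: "v \<in> units_O Ord"
    and NM: "N <#\<^bsub>GL Ord m\<^esub> \<Gamma> = mu Ord m v <#\<^bsub>GL Ord m\<^esub> (M <#\<^bsub>GL Ord m\<^esub> \<Gamma>)"
    using sim unfolding coset_sim_def by blast
  obtain w where w: "w \<in> units_O Ord" and w_cong: "w * \<alpha> - of_int l * (\<beta> * v) \<in> m"
    using u v \<alpha>_cong by (rule cong_unit_rescale)
  have unit_mod: "\<beta> * v \<in> units_mod Ord m" "of_int l \<in> units_mod Ord m" "w \<in> units_mod Ord m"
    using units_mod_mult[OF \<beta>] v w l units_O_subset_units_mod
    by (auto simp: Lam_cop_def of_int_in_units_mod)
  note in_GL = mu_in_GL[OF \<alpha>] mu_in_GL[OF \<beta>] mu_in_GL[OF unit_mod(1)] mu_in_GL[OF unit_mod(3)]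
  have \<Gamma>_sub: "\<Gamma> \<subseteq> carrier (GL Ord m)" by (rule subgroup.subset[OF subgroup_\<Gamma>])
  have cong: "mu Ord m (of_int l * (\<beta> * v)) = mu Ord m (w * \<alpha>)"
    using unit_mod \<alpha> w_cong by (intro mu_cong[symmetric]) (auto simp: units_mod_def mult_mem)
  have v_GL: "mu Ord m v \<in> carrier (GL Ord m)"
    using v units_O_subset_units_mod mu_in_GL by blast
  have "(mu Ord m \<beta> \<otimes>\<^bsub>GL Ord m\<^esub> N) <#\<^bsub>GL Ord m\<^esub> \<Gamma> = mu Ord m \<beta> <#\<^bsub>GL Ord m\<^esub> (N <#\<^bsub>GL Ord m\<^esub> \<Gamma>)"
    using in_GL N \<Gamma>_sub by (simp add: GL.lcos_m_assoc)
  also have "\<dots> = (mu Ord m \<beta> \<otimes>\<^bsub>GL Ord m\<^esub> mu Ord m v \<otimes>\<^bsub>GL Ord m\<^esub> M) <#\<^bsub>GL Ord m\<^esub> \<Gamma>"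
    using in_GL v_GL M \<Gamma>_sub by (simp add: NM GL.lcos_m_assoc GL.l_coset_subset_G GL.m_assoc)
  also have "\<dots> = (mu Ord m (\<beta> * v) \<otimes>\<^bsub>GL Ord m\<^esub> M) <#\<^bsub>GL Ord m\<^esub> \<Gamma>"
    using \<beta> v units_O_subset_units_mod by (simp add: mu_mult_GL subsetD)
  also have "\<dots> = (mu Ord m (of_int l) \<otimes>\<^bsub>GL Ord m\<^esub> (mu Ord m (\<beta> * v) \<otimes>\<^bsub>GL Ord m\<^esub> M)) <#\<^bsub>GL Ord m\<^esub> \<Gamma>"
    using \<Lambda>_\<Gamma> l in_GL M mu_in_GL[OF unit_mod(2)]
    by (intro GL.l_coset_absorb_central[symmetric] subgroup_\<Gamma> mu_of_int_central) auto
  also have "\<dots> = (mu Ord m w \<otimes>\<^bsub>GL Ord m\<^esub> (mu Ord m \<alpha> \<otimes>\<^bsub>GL Ord m\<^esub> M)) <#\<^bsub>GL Ord m\<^esub> \<Gamma>"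
    using unit_mod \<alpha> in_GL M mu_in_GL[OF unit_mod(2)]
    by (simp add: cong mu_mult_GL flip: GL.m_assoc)
  finally show ?thesis
    using coset_sim_mu_unit[OF w] M in_GL by simp
qed

lemma mu_action_one:
  "M \<in> carrier (GL Ord m) \<Longrightarrow>
    coset_sim Ord m ((mu Ord m 1 \<otimes>\<^bsub>GL Ord m\<^esub> M) <#\<^bsub>GL Ord m\<^esub> \<Gamma>) (M <#\<^bsub>GL Ord m\<^esub> \<Gamma>)"
  using coset_sim_refl by (simp flip: one_GL)

lemma mu_action_mult:
  assumes "\<alpha> \<in> units_mod Ord m" and "\<beta> \<in> units_mod Ord m" and "M \<in> carrier (GL Ord m)"
  shows "coset_sim Ord m ((mu Ord m \<alpha> \<otimes>\<^bsub>GL Ord m\<^esub> (mu Ord m \<beta> \<otimes>\<^bsub>GL Ord m\<^esub> M)) <#\<^bsub>GL Ord m\<^esub> \<Gamma>)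
                          ((mu Ord m (\<alpha> * \<beta>) \<otimes>\<^bsub>GL Ord m\<^esub> M) <#\<^bsub>GL Ord m\<^esub> \<Gamma>)"
  using assms coset_sim_refl units_mod_mult
  by (simp add: mu_mult_GL mu_in_GL flip: GL.m_assoc)

end

end

theorem corollary3p1:
  fixes K Ord m :: "complex set" and \<Lambda> :: "int set"
    and \<Gamma> :: "(complex set \<Rightarrow> complex set) set"
  assumes "is_imag_quad_field K"
    and "is_order K Ord"
    and "proper_ideal K Ord m"
    and "1 \<in> \<Lambda>" and "\<forall>a\<in>\<Lambda>. \<forall>b\<in>\<Lambda>. a * b \<in> \<Lambda>"
    and "subgroup \<Gamma> (GL Ord m)"
    and "Gamma_OL K Ord m \<Lambda> \<subseteq> \<Gamma>"
  shows "(\<forall>\<alpha>\<in>units_mod Ord m. mu Ord m \<alpha> \<in> carrier (GL Ord m))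
    \<and> (\<forall>\<alpha>\<in>units_mod Ord m. \<forall>\<beta>\<in>units_mod Ord m. \<forall>M\<in>carrier (GL Ord m). \<forall>N\<in>carrier (GL Ord m).
         ker_equiv Ord m \<Lambda> \<alpha> \<beta> \<and> coset_sim Ord m (M <#\<^bsub>GL Ord m\<^esub> \<Gamma>) (N <#\<^bsub>GL Ord m\<^esub> \<Gamma>) \<longrightarrow>
         coset_sim Ord m ((mu Ord m \<alpha> \<otimes>\<^bsub>GL Ord m\<^esub> M) <#\<^bsub>GL Ord m\<^esub> \<Gamma>)
                       ((mu Ord m \<beta> \<otimes>\<^bsub>GL Ord m\<^esub> N) <#\<^bsub>GL Ord m\<^esub> \<Gamma>))
    \<and> (\<forall>M\<in>carrier (GL Ord m).
         coset_sim Ord m ((mu Ord m 1 \<otimes>\<^bsub>GL Ord m\<^esub> M) <#\<^bsub>GL Ord m\<^esub> \<Gamma>) (M <#\<^bsub>GL Ord m\<^esub> \<Gamma>))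
    \<and> (\<forall>\<alpha>\<in>units_mod Ord m. \<forall>\<beta>\<in>units_mod Ord m. \<forall>M\<in>carrier (GL Ord m).
         coset_sim Ord m ((mu Ord m \<alpha> \<otimes>\<^bsub>GL Ord m\<^esub> (mu Ord m \<beta> \<otimes>\<^bsub>GL Ord m\<^esub> M)) <#\<^bsub>GL Ord m\<^esub> \<Gamma>)
                       ((mu Ord m (\<alpha> * \<beta>) \<otimes>\<^bsub>GL Ord m\<^esub> M) <#\<^bsub>GL Ord m\<^esub> \<Gamma>))"
proof -
  interpret ideal_of_subring Ord m
    using assms(2,3) by unfold_locales (auto simp: is_order_def proper_ideal_def)
  have \<Lambda>_\<Gamma>: "\<forall>l\<in>Lam_cop Ord m \<Lambda>. mu Ord m (of_int l) \<in> \<Gamma>"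
    using mu_of_int_in_subgroup[OF assms(1,6,7)] by blast
  show ?thesis
    by (intro conjI ballI impI)
      (simp_all add: mu_in_GL mu_action_well_defined[OF assms(6) \<Lambda>_\<Gamma>]
        mu_action_one[OF assms(6)] mu_action_mult[OF assms(6)])
qed

end
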